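(* Let $n\ge 5$. Then for every $1\le r\le n$, every subset of $N(W_r)$ of size at least $n-2$ is a resolving set of $L(n)$.
   Context: For $n\ge 5$, $H(n)$ is the graph with vertex set $V_1\cup V_2$, where $V_1=\{v_1,\dots,v_n\}$ and $V_2=\{v_iv_j: 1\le i<j\le n\}$, and $v_r$ is adjacent to $v_iv_j$ iff $r\in\{i,j\}$ (no other edges). $L(n)$ is the line graph of $H(n)$: its vertices are the edges $\{v_r,v_iv_j\}$ of $H(n)$ (with $r\in\{i,j\}$), two being adjacent iff they share an endpoint. For $1\le r\le n$, $W_r$ is the set of vertices of $L(n)$ of the form $\{v_r,v_iv_j\}$ (the edges of $H(n)$ incident to $v_r$); it is a maximal clique of size $n-1$. $N(W_r)$ denotes the set of vertices of $L(n)$ not in $W_r$ that are adjacent to some vertex of $W_r$, i.e. $N(W_r)=\{\{v_k,v_iv_j\}: k\neq r,\ \{i,j\}=\{r,k\}\}$, a set of size $n-1$. $d$ is the shortest-path distance; a set $Q$ of vertices is a resolving set of $G$ if any two distinct vertices $x,y$ satisfy $(d(x,q))_{q\in Q}\neq(d(y,q))_{q\in Q}$. *)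

theory Defs
  imports Main
begin

definition is_walk :: "'a set \<Rightarrow> ('a \<Rightarrow> 'a \<Rightarrow> bool) \<Rightarrow> 'a list \<Rightarrow> bool" where
  "is_walk V E p \<longleftrightarrow> p \<noteq> [] \<and> set p \<subseteq> V \<and>
     (\<forall>i. Suc i < length p \<longrightarrow> E (p ! i) (p ! Suc i))"

definition gdist :: "'a set \<Rightarrow> ('a \<Rightarrow> 'a \<Rightarrow> bool) \<Rightarrow> 'a \<Rightarrow> 'a \<Rightarrow> nat" where
  "gdist V E x y = (LEAST k. \<exists>p. is_walk V E p \<and> hd p = x \<and> last p = y \<and> length p = Suc k)"

definition resolving_set :: "'a set \<Rightarrow> ('a \<Rightarrow> 'a \<Rightarrow> bool) \<Rightarrow> 'a set \<Rightarrow> bool" where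
  "resolving_set V E Q \<longleftrightarrow> Q \<subseteq> V \<and>
     (\<forall>x\<in>V. \<forall>y\<in>V. x \<noteq> y \<longrightarrow> (\<exists>q\<in>Q. gdist V E x q \<noteq> gdist V E y q))"

text \<open>The graph L(n): the vertex \{v_r, v_iv_j\} (r in \{i,j\}) is encoded as the pair (r, \{i,j\}).
  Two distinct vertices are adjacent iff the corresponding edges of H(n) share an endpoint,
  i.e. same v_r or same v_iv_j.\<close>

definition LV :: "nat \<Rightarrow> (nat \<times> nat set) set" where
  "LV n = {(r, e). \<exists>i j. 1 \<le> i \<and> i < j \<and> j \<le> n \<and> e = {i, j} \<and> r \<in> {i, j}}"

definition LE :: "nat \<times> nat set \<Rightarrow> nat \<times> nat set \<Rightarrow> bool" where
  "LE x y \<longleftrightarrow> x \<noteq> y \<and> (fst x = fst y \<or> snd x = snd y)"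

definition W :: "nat \<Rightarrow> nat \<Rightarrow> (nat \<times> nat set) set" where
  "W n r = {x \<in> LV n. fst x = r}"

definition NW :: "nat \<Rightarrow> nat \<Rightarrow> (nat \<times> nat set) set" where
  "NW n r = {x \<in> LV n. x \<notin> W n r \<and> (\<exists>y\<in>W n r. LE x y)}"

end

theory Submission
  imports Defs
begin

(* The distance from a vertex {v_a, v_av_b} of L(n) to a vertex {v_k, v_kv_r} of N(W_r) is 0, 1, 2
   or 3 according to which of a, b coincide with k and r (landmark_dist).  A case analysis on the
   positions of r shows that any two distinct vertices are separated by at least two indices k;
   when exactly one of them lies in W_r, every k outside a set of three indices separates them,
   and n >= 5 leaves two such k.  Since S omits at most one of the n - 1 vertices of N(W_r), one
   of the two separating vertices lies in S. *)

lemma two_elements_in_Diff: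
  assumes "finite X" "card X + 2 \<le> card A"
  obtains x y where "x \<noteq> y" "x \<in> A - X" "y \<in> A - X"
proof -
  have "2 \<le> card (A - X)"
    using assms diff_card_le_card_Diff[of X A] by linarith
  then obtain T where "T \<subseteq> A - X" "card T = 2"
    by (meson obtain_subset_with_card_n)
  then show thesis using that by (auto simp: card_2_iff)
qed

lemma mem_one_of_two_if_card_le_Suc:
  assumes "finite A" "S \<subseteq> A" "card A \<le> Suc (card S)" "x \<in> A" "y \<in> A" "x \<noteq> y"
  shows "x \<in> S \<or> y \<in> S"
proof (rule ccontr)
  assume "\<not> (x \<in> S \<or> y \<in> S)"
  then have "S \<subseteq> A - {x, y}" using assms(2) by blast
  then have "card S \<le> card A - 2"
    using assms card_mono[of "A - {x, y}" S] by (simp add: card_Diff_subset)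
  moreover have "2 \<le> card A"
    using assms card_mono[of A "{x, y}"] by simp
  ultimately show False using assms(3) by linarith
qed

lemma not_is_walk_Nil [simp]: "\<not> is_walk V E []"
  by (simp add: is_walk_def)

lemma is_walk_singleton [simp]: "is_walk V E [x] \<longleftrightarrow> x \<in> V"
  by (simp add: is_walk_def)

lemma is_walk_Cons_Cons [simp]:
  "is_walk V E (x # y # p) \<longleftrightarrow> x \<in> V \<and> E x y \<and> is_walk V E (y # p)"
  by (auto simp: is_walk_def nth_Cons less_Suc_eq_0_disj split: nat.splits)

lemma walk_length_le_2:
  assumes "is_walk V E p" "length p \<le> 2"
  shows "hd p = last p \<or> E (hd p) (last p)"
  using assms by (auto simp: numeral_eq_Suc le_Suc_eq length_Suc_conv)

lemma walk_length_le_3: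
  assumes "is_walk V E p" "length p \<le> 3"
  shows "hd p = last p \<or> E (hd p) (last p) \<or> (\<exists>z\<in>V. E (hd p) z \<and> E z (last p))"
  using assms by (auto simp: numeral_eq_Suc le_Suc_eq length_Suc_conv)

lemma gdist_eqI:
  assumes "is_walk V E p" "hd p = x" "last p = y" "length p = Suc k"
    and "\<And>p m. is_walk V E p \<Longrightarrow> hd p = x \<Longrightarrow> last p = y \<Longrightarrow> length p = Suc m \<Longrightarrow> k \<le> m"
  shows "gdist V E x y = k"
  unfolding gdist_def by (rule Least_equality) (use assms in blast)+

lemma gdist_self: "x \<in> V \<Longrightarrow> gdist V E x x = 0"
  by (rule gdist_eqI[where p="[x]"]) auto

lemma gdist_eq_1:
  assumes "x \<noteq> y" "E x y" "x \<in> V" "y \<in> V"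
  shows "gdist V E x y = 1"
proof (rule gdist_eqI[where p="[x, y]"])
  fix p m assume "is_walk V E p" "hd p = x" "last p = y" "length p = Suc m"
  then show "1 \<le> m" using assms by (cases m) (auto simp: length_Suc_conv)
qed (use assms in auto)

lemma gdist_eq_2:
  assumes "x \<noteq> y" "\<not> E x y" "x \<in> V" "y \<in> V" "z \<in> V" "E x z" "E z y"
  shows "gdist V E x y = 2"
proof (rule gdist_eqI[where p="[x, z, y]"])
  fix p m assume "is_walk V E p" "hd p = x" "last p = y" "length p = Suc m"
  then show "2 \<le> m" using walk_length_le_2[of V E p] assms by fastforce
qed (use assms in auto)

lemma gdist_eq_3:
  assumes "x \<noteq> y" "\<not> E x y" "\<not> (\<exists>z\<in>V. E x z \<and> E z y)"
    and "x \<in> V" "y \<in> V" "u \<in> V" "v \<in> V" "E x u" "E u v" "E v y"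
  shows "gdist V E x y = 3"
proof (rule gdist_eqI[where p="[x, u, v, y]"])
  fix p m assume "is_walk V E p" "hd p = x" "last p = y" "length p = Suc m"
  then show "3 \<le> m" using walk_length_le_3[of V E p] assms by fastforce
qed (use assms in auto)

lemma LV_pair_iff [simp]: "(a, {a, b}) \<in> LV n \<longleftrightarrow> a \<noteq> b \<and> a \<in> {1..n} \<and> b \<in> {1..n}"
proof
  assume "(a, {a, b}) \<in> LV n"
  then show "a \<noteq> b \<and> a \<in> {1..n} \<and> b \<in> {1..n}"
    unfolding LV_def by (auto simp: doubleton_eq_iff)
next
  assume ab: "a \<noteq> b \<and> a \<in> {1..n} \<and> b \<in> {1..n}"
  show "(a, {a, b}) \<in> LV n"
  proof (cases "a < b")
    case True
    with ab show ?thesis unfolding LV_def by fastforce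
  next
    case False
    with ab have "b < a" "{a, b} = {b, a}" by auto
    with ab show ?thesis unfolding LV_def by fastforce
  qed
qed

lemma LV_cases:
  assumes "x \<in> LV n"
  obtains a b where "x = (a, {a, b})" "a \<noteq> b" "a \<in> {1..n}" "b \<in> {1..n}"
proof -
  from assms obtain i j where "x = (i, {i, j}) \<or> x = (j, {j, i})" "1 \<le> i" "i < j" "j \<le> n"
    unfolding LV_def by (auto simp: insert_commute)
  then show thesis using that by auto
qed

lemma LE_pair_iff:
  assumes "a \<noteq> b" "c \<noteq> d"
  shows "LE (a, {a, b}) (c, {c, d}) \<longleftrightarrow> (a = c \<and> b \<noteq> d) \<or> (a = d \<and> b = c)"
  using assms unfolding LE_def by (auto simp: doubleton_eq_iff)

lemma NW_eq:
  assumes "r \<in> {1..n}"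
  shows "NW n r = (\<lambda>k. (k, {k, r})) ` ({1..n} - {r})"
proof (intro equalityI subsetI)
  fix x assume x: "x \<in> NW n r"
  then obtain a b where ab: "x = (a, {a, b})" "a \<noteq> b" "a \<in> {1..n}" "b \<in> {1..n}"
    unfolding NW_def by (blast elim: LV_cases)
  from x obtain y where y: "y \<in> W n r" "LE x y" "a \<noteq> r"
    unfolding NW_def W_def ab by auto
  then obtain c where "y = (r, {r, c})" "r \<noteq> c"
    unfolding W_def by (auto elim: LV_cases)
  with y ab have "a = c" "b = r" by (auto simp: LE_pair_iff)
  with ab y show "x \<in> (\<lambda>k. (k, {k, r})) ` ({1..n} - {r})" by auto
next
  fix x assume "x \<in> (\<lambda>k. (k, {k, r})) ` ({1..n} - {r})"
  then obtain k where k: "x = (k, {k, r})" "k \<in> {1..n}" "k \<noteq> r" by blast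
  have "(r, {r, k}) \<in> W n r" unfolding W_def using k assms by auto
  moreover have "LE x (r, {r, k})" using k by (simp add: LE_pair_iff)
  moreover have "x \<in> LV n" "x \<notin> W n r" using k assms by (auto simp: W_def)
  ultimately show "x \<in> NW n r" unfolding NW_def by blast
qed

definition landmark_dist :: "nat \<Rightarrow> nat \<Rightarrow> nat \<Rightarrow> nat \<Rightarrow> nat" where
  "landmark_dist r k a b =
     (if (a, b) = (k, r) then 0
      else if a = k \<or> (a, b) = (r, k) then 1
      else if a = r \<or> b = k then 2
      else 3)"

lemma gdist_landmark:
  assumes "a \<noteq> b" "a \<in> {1..n}" "b \<in> {1..n}" "k \<noteq> r" "k \<in> {1..n}" "r \<in> {1..n}"
  shows "gdist (LV n) LE (a, {a, b}) (k, {k, r}) = landmark_dist r k a b"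
proof -
  have x: "(a, {a, b}) \<in> LV n" and y: "(k, {k, r}) \<in> LV n"
    using assms by auto
  consider "(a, b) = (k, r)" | "(a, b) \<noteq> (k, r)" "a = k \<or> (a, b) = (r, k)"
    | "a = r" "b \<noteq> k" | "b = k" "a \<noteq> r" | "a \<notin> {k, r}" "b \<noteq> k"
    by blast
  then show ?thesis
  proof cases
    case 1
    then show ?thesis using x by (auto simp: gdist_self landmark_dist_def)
  next
    case 2
    then have "gdist (LV n) LE (a, {a, b}) (k, {k, r}) = 1"
      using assms by (intro gdist_eq_1) (auto simp: LE_pair_iff)
    with 2 show ?thesis by (auto simp: landmark_dist_def)
  next
    case 3
    then have "gdist (LV n) LE (a, {a, b}) (k, {k, r}) = 2"
      using assms by (intro gdist_eq_2[where z="(r, {r, k})"]) (auto simp: LE_pair_iff)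
    with 3 assms show ?thesis by (auto simp: landmark_dist_def)
  next
    case 4
    then have "gdist (LV n) LE (a, {a, b}) (k, {k, r}) = 2"
      using assms by (intro gdist_eq_2[where z="(k, {k, a})"]) (auto simp: LE_pair_iff)
    with 4 assms show ?thesis by (auto simp: landmark_dist_def)
  next
    case 5
    have "\<not> (\<exists>z\<in>LV n. LE (a, {a, b}) z \<and> LE z (k, {k, r}))"
      using 5 assms by (auto simp: LE_pair_iff elim!: LV_cases)
    then have "gdist (LV n) LE (a, {a, b}) (k, {k, r}) = 3"
      using 5 assms
      by (intro gdist_eq_3[where u="(a, {a, k})" and v="(k, {k, a})"]) (auto simp: LE_pair_iff)
    with 5 show ?thesis by (auto simp: landmark_dist_def)
  qed
qed

lemma two_separating_landmarks:
  assumes "5 \<le> n" "r \<in> {1..n}"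
    and "a \<noteq> b" "a \<in> {1..n}" "b \<in> {1..n}"
    and "a' \<noteq> b'" "a' \<in> {1..n}" "b' \<in> {1..n}"
    and "(a, b) \<noteq> (a', b')"
  obtains k1 k2 where "k1 \<noteq> k2" "k1 \<in> {1..n} - {r}" "k2 \<in> {1..n} - {r}"
    "landmark_dist r k1 a b \<noteq> landmark_dist r k1 a' b'"
    "landmark_dist r k2 a b \<noteq> landmark_dist r k2 a' b'"
proof -
  have far: "card {r, c, d} + 2 \<le> card {1..n}" for c d :: nat
  proof -
    have "card {r, c, d} \<le> 3" by (auto simp: card_insert_if)
    then show ?thesis using assms(1) by simp
  qed
  consider "a = r" "a' = r" | "a = r" "a' \<noteq> r" | "a \<noteq> r" "a' = r"
    | "a \<noteq> r" "a' \<noteq> r" "a \<noteq> a'" | "a = a'" "a \<noteq> r" "b \<noteq> r" "b' \<noteq> r"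
    | "a = a'" "a \<noteq> r" "b = r" | "a = a'" "a \<noteq> r" "b' = r"
    by blast
  then show thesis
  proof cases
    case 1
    then show thesis using assms by (intro that[of b b']) (auto simp: landmark_dist_def)
  next
    case 2
    obtain k1 k2 where "k1 \<noteq> k2" "k1 \<in> {1..n} - {r, a', b'}" "k2 \<in> {1..n} - {r, a', b'}"
      using two_elements_in_Diff[OF _ far] by blast
    then show thesis using 2 by (intro that[of k1 k2]) (auto simp: landmark_dist_def)
  next
    case 3
    obtain k1 k2 where "k1 \<noteq> k2" "k1 \<in> {1..n} - {r, a, b}" "k2 \<in> {1..n} - {r, a, b}"
      using two_elements_in_Diff[OF _ far] by blast
    then show thesis using 3 by (intro that[of k1 k2]) (auto simp: landmark_dist_def)
  next
    case 4
    then show thesis using assms by (intro that[of a a']) (auto simp: landmark_dist_def)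
  next
    case 5
    then show thesis using assms by (intro that[of b b']) (auto simp: landmark_dist_def)
  next
    case 6
    then show thesis using assms by (intro that[of a b']) (auto simp: landmark_dist_def)
  next
    case 7
    then show thesis using assms by (intro that[of a b]) (auto simp: landmark_dist_def)
  qed
qed

lemma two_resolving_landmarks:
  assumes "5 \<le> n" "r \<in> {1..n}" "x \<in> LV n" "y \<in> LV n" "x \<noteq> y"
  obtains k1 k2 where "k1 \<noteq> k2" "k1 \<in> {1..n} - {r}" "k2 \<in> {1..n} - {r}"
    "gdist (LV n) LE x (k1, {k1, r}) \<noteq> gdist (LV n) LE y (k1, {k1, r})"
    "gdist (LV n) LE x (k2, {k2, r}) \<noteq> gdist (LV n) LE y (k2, {k2, r})"
proof -
  obtain a b where x: "x = (a, {a, b})" "a \<noteq> b" "a \<in> {1..n}" "b \<in> {1..n}"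
    using \<open>x \<in> LV n\<close> by (rule LV_cases)
  obtain a' b' where y: "y = (a', {a', b'})" "a' \<noteq> b'" "a' \<in> {1..n}" "b' \<in> {1..n}"
    using \<open>y \<in> LV n\<close> by (rule LV_cases)
  have "(a, b) \<noteq> (a', b')" using x y \<open>x \<noteq> y\<close> by auto
  then obtain k1 k2 where "k1 \<noteq> k2" "k1 \<in> {1..n} - {r}" "k2 \<in> {1..n} - {r}"
    "landmark_dist r k1 a b \<noteq> landmark_dist r k1 a' b'"
    "landmark_dist r k2 a b \<noteq> landmark_dist r k2 a' b'"
    using two_separating_landmarks[OF assms(1,2) x(2-4) y(2-4)] by blast
  with x y assms(2) show thesis by (intro that[of k1 k2]) (simp_all add: gdist_landmark)
qed

theorem lemma3p3:
  fixes n r :: nat and S :: "(nat \<times> nat set) set"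
  assumes "n \<ge> 5" and "1 \<le> r" and "r \<le> n"
    and "S \<subseteq> NW n r" and "card S \<ge> n - 2"
  shows "resolving_set (LV n) LE S"
proof -
  have r: "r \<in> {1..n}" using assms(2,3) by simp
  note NW = NW_eq[OF r]
  have "card (NW n r) = n - 1"
    unfolding NW using r by (subst card_image) (auto simp: inj_on_def)
  then have hit: "(k1, {k1, r}) \<in> S \<or> (k2, {k2, r}) \<in> S"
    if "k1 \<noteq> k2" "k1 \<in> {1..n} - {r}" "k2 \<in> {1..n} - {r}" for k1 k2
    using that assms(4,5) by (intro mem_one_of_two_if_card_le_Suc[where A="NW n r"]) (auto simp: NW)
  have "S \<subseteq> LV n" using assms(4) by (auto simp: NW_def)
  moreover have "\<exists>q\<in>S. gdist (LV n) LE x q \<noteq> gdist (LV n) LE y q"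
    if "x \<in> LV n" "y \<in> LV n" "x \<noteq> y" for x y
    using two_resolving_landmarks[OF assms(1) r that] hit by metis
  ultimately show ?thesis unfolding resolving_set_def by blast
qed

end
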